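(* Let $v_{max}\in\mathbb{N}$, $V=\{1,\ldots,v_{max}\}$, $b>0$ and $K>0$. Let $f_{mort}:V\to(0,1)$ be any function, and let $f_{mut}:\{-v_{max},\ldots,0,\ldots,v_{max}\}\to[0,1]$ satisfy: $f_{mut}(-u)=f_{mut}(u)$ for all $u$; $u\mapsto f_{mut}(u)$ is decreasing for $u\geq 0$; and $\sum_{u=-v_{max}}^{v_{max}} f_{mut}(u)=1$. Let $P_0:V\to[0,\infty)$ and define $P_n:V\to[0,\infty)$ recursively by $$P_{n+1}(v)=(1-f_{mort}(v))P_n(v)+b\,(P_n\star f_{mut})(v)\left(1-\frac{\|P_n\|_1}{K}\right)\mathbf{1}_{[0,K]}(\|P_n\|_1),\qquad v=1,\ldots,v_{max},$$ where $(P_n\star f_{mut})(v)=\sum_{u=1}^{v_{max}}P_n(u)f_{mut}(v-u)$, $\|P_n\|_1=\sum_{v=1}^{v_{max}}P_n(v)$, and $\mathbf{1}_{[0,K]}$ is the indicator function of $[0,K]$. Define $F_{mut}(u)=\sum_{v=1}^{v_{max}}f_{mut}(v-u)$ for $u=1,\ldots,v_{max}$, and $$B_{up}:=\max\left(\frac{(\|1-f_{mort}\|_\infty+b\|F_{mut}\|_\infty)^2}{4b\|F_{mut}\|_\infty}\cdot K,\ K,\ \|P_0\|_1\right),$$ where $\|\cdot\|_\infty$ denotes the maximum norm (so $\|1-f_{mort}\|_\infty=\max_{v\in V}(1-f_{mort}(v))$ and $\|F_{mut}\|_\infty=\max_u F_{mut}(u)$). Then $\|P_n\|_1\leq B_{up}$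 for all $n\in\mathbb{N}_0$.
   Context: This is a discrete population model (a Verhulst-type model with a trait): $P_n(v)$ is the number of individuals in generation $n$ with trait value $v$, $b$ is the birth rate, $K$ the environmental capacity, $f_{mort}$ the trait-dependent mortality rate and $f_{mut}$ the mutation distribution. *)

theory Defs
  imports "HOL-Analysis.Analysis"
begin

definition l1norm :: "nat \<Rightarrow> (nat \<Rightarrow> real) \<Rightarrow> real" where
  "l1norm vmax P = (\<Sum>v = 1..vmax. P v)"

definition conv_mut :: "nat \<Rightarrow> (nat \<Rightarrow> real) \<Rightarrow> (int \<Rightarrow> real) \<Rightarrow> nat \<Rightarrow> real" where
  "conv_mut vmax P fmut v = (\<Sum>u = 1..vmax. P u * fmut (int v - int u))"

definition indic_0K :: "real \<Rightarrow> real \<Rightarrow> real" where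
  "indic_0K K x = (if 0 \<le> x \<and> x \<le> K then 1 else 0)"

primrec pop :: "nat \<Rightarrow> real \<Rightarrow> real \<Rightarrow> (nat \<Rightarrow> real) \<Rightarrow> (int \<Rightarrow> real)
                 \<Rightarrow> (nat \<Rightarrow> real) \<Rightarrow> nat \<Rightarrow> nat \<Rightarrow> real" where
  "pop vmax b K fmort fmut P0 0 = P0"
| "pop vmax b K fmort fmut P0 (Suc n) =
     (let Pn = pop vmax b K fmort fmut P0 n in
      (\<lambda>v. (1 - fmort v) * Pn v
           + b * conv_mut vmax Pn fmut v * (1 - l1norm vmax Pn / K)
               * indic_0K K (l1norm vmax Pn)))"

definition Fmut :: "nat \<Rightarrow> (int \<Rightarrow> real) \<Rightarrow> nat \<Rightarrow> real" where
  "Fmut vmax fmut u = (\<Sum>v = 1..vmax. fmut (int v - int u))"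

definition Bup :: "nat \<Rightarrow> real \<Rightarrow> real \<Rightarrow> (nat \<Rightarrow> real) \<Rightarrow> (int \<Rightarrow> real) \<Rightarrow> (nat \<Rightarrow> real) \<Rightarrow> real" where
  "Bup vmax b K fmort fmut P0 =
     (let m = Max ((\<lambda>v. 1 - fmort v) ` {1..vmax});
          F = Max (Fmut vmax fmut ` {1..vmax})
      in max ((m + b * F)\<^sup>2 / (4 * b * F) * K) (max K (l1norm vmax P0)))"

end

theory Submission
  imports Defs
begin

text \<open>Exchanging the order of summation turns the summed convolution into
  \<open>\<Sum>u. P\<^sub>n u * F\<^sub>m\<^sub>u\<^sub>t u\<close>. Hence, with \<open>m = max (1 - f\<^sub>m\<^sub>o\<^sub>r\<^sub>t)\<close>,
  \<open>F = max F\<^sub>m\<^sub>u\<^sub>t\<close> and \<open>S = \<parallel>P\<^sub>n\<parallel>\<^sub>1\<close>, the next norm is at most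
  \<open>m S + b F S (1 - S / K)\<close> when \<open>S \<le> K\<close> and at most \<open>m S \<le> S\<close> otherwise.
  The first bound is a concave parabola in \<open>S\<close> with maximum \<open>(m + b F)\<^sup>2 K / (4 b F)\<close>,
  so by induction the norm never exceeds the larger of this value and \<open>\<parallel>P\<^sub>0\<parallel>\<^sub>1\<close>.
  Symmetry, monotonicity and normalisation of \<open>f\<^sub>m\<^sub>u\<^sub>t\<close> serve only to give
  \<open>f\<^sub>m\<^sub>u\<^sub>t 0 > 0\<close>, hence \<open>F > 0\<close>.\<close>

lemma l1norm_nonneg:
  "(\<And>v. v \<in> {1..vmax} \<Longrightarrow> 0 \<le> P v) \<Longrightarrow> 0 \<le> l1norm vmax P"
  unfolding l1norm_def by (intro sum_nonneg) auto

lemma conv_mut_nonneg: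
  assumes "\<And>u. u \<in> {1..vmax} \<Longrightarrow> 0 \<le> P u"
    and "\<And>u. u \<in> {-int vmax..int vmax} \<Longrightarrow> 0 \<le> fmut u"
    and "v \<in> {1..vmax}"
  shows "0 \<le> conv_mut vmax P fmut v"
  unfolding conv_mut_def using assms by (intro sum_nonneg mult_nonneg_nonneg) auto

lemma sum_conv_mut:
  "(\<Sum>v = 1..vmax. conv_mut vmax P fmut v) = (\<Sum>u = 1..vmax. P u * Fmut vmax fmut u)"
  unfolding conv_mut_def Fmut_def by (subst sum.swap) (simp add: sum_distrib_left)

lemma Fmut_ge_center:
  assumes "\<And>w. w \<in> {-int vmax..int vmax} \<Longrightarrow> 0 \<le> fmut w" and "u \<in> {1..vmax}"
  shows "fmut 0 \<le> Fmut vmax fmut u"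
proof -
  have "fmut (int u - int u) \<le> Fmut vmax fmut u"
    unfolding Fmut_def using assms by (intro member_le_sum) auto
  then show ?thesis by simp
qed

lemma mutation_kernel_center_pos:
  fixes fmut :: "int \<Rightarrow> real"
  assumes nonneg: "\<And>u. u \<in> {-int vmax..int vmax} \<Longrightarrow> 0 \<le> fmut u"
    and sym: "\<And>u. u \<in> {-int vmax..int vmax} \<Longrightarrow> fmut (-u) = fmut u"
    and decr: "\<And>u w. 0 \<le> u \<Longrightarrow> u \<le> w \<Longrightarrow> w \<le> int vmax \<Longrightarrow> fmut w \<le> fmut u"
    and sum_one: "(\<Sum>u = -int vmax..int vmax. fmut u) = 1"
  shows "0 < fmut 0"
proof (rule ccontr)
  assume "\<not> 0 < fmut 0"
  then have "fmut 0 = 0" using nonneg[of 0] by simp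
  then have "fmut u = 0" if "u \<in> {-int vmax..int vmax}" for u
    using that nonneg[OF that] decr[of 0 u] decr[of 0 "-u"] sym[OF that]
    by (cases "0 \<le> u") auto
  then have "(\<Sum>u = -int vmax..int vmax. fmut u) = 0" by simp
  with sum_one show False by simp
qed

lemma logistic_le_vertex:
  fixes a c K x :: real
  assumes "0 < c" and "0 < K"
  shows "a * x + c * x * (1 - x / K) \<le> (a + c)\<^sup>2 / (4 * c) * K"
proof -
  have "4 * c * (a * x + c * x * (1 - x / K)) * K = (a + c)\<^sup>2 * K * K - ((a + c) * K - 2 * c * x)\<^sup>2"
    using assms by (simp add: field_simps power2_eq_square)
  also have "\<dots> \<le> (a + c)\<^sup>2 * K * K" by simp
  finally have "4 * c * (a * x + c * x * (1 - x / K)) \<le> (a + c)\<^sup>2 * K"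
    using assms by (simp add: mult_le_cancel_right)
  then show ?thesis
    using assms by (simp add: field_simps)
qed

locale trait_population =
  fixes vmax :: nat and b K :: real
    and fmort :: "nat \<Rightarrow> real" and fmut :: "int \<Rightarrow> real" and P0 :: "nat \<Rightarrow> real"
  assumes b_nonneg: "0 \<le> b" and K_pos: "0 < K"
    and fmort_bounds: "\<And>v. v \<in> {1..vmax} \<Longrightarrow> 0 \<le> fmort v \<and> fmort v \<le> 1"
    and fmut_nonneg: "\<And>u. u \<in> {-int vmax..int vmax} \<Longrightarrow> 0 \<le> fmut u"
    and P0_nonneg: "\<And>v. v \<in> {1..vmax} \<Longrightarrow> 0 \<le> P0 v"
begin

abbreviation P :: "nat \<Rightarrow> nat \<Rightarrow> real" where
  "P \<equiv> pop vmax b K fmort fmut P0"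

abbreviation S :: "nat \<Rightarrow> real" where
  "S n \<equiv> l1norm vmax (P n)"

lemma P_nonneg: "v \<in> {1..vmax} \<Longrightarrow> 0 \<le> P n v"
proof (induction n arbitrary: v)
  case 0
  then show ?case using P0_nonneg by simp
next
  case (Suc n)
  have "0 \<le> (1 - S n / K) * indic_0K K (S n)"
    using K_pos by (auto simp: indic_0K_def field_simps)
  moreover have "0 \<le> conv_mut vmax (P n) fmut v"
    using Suc by (intro conv_mut_nonneg fmut_nonneg) auto
  moreover have "0 \<le> (1 - fmort v) * P n v"
    using Suc fmort_bounds[OF Suc.prems] by simp
  ultimately show ?case
    using b_nonneg by (simp add: Let_def mult.assoc)
qed

lemma S_nonneg: "0 \<le> S n"
  using P_nonneg by (intro l1norm_nonneg)

lemma S_Suc: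
  "S (Suc n) = (\<Sum>v = 1..vmax. (1 - fmort v) * P n v)
     + b * (1 - S n / K) * indic_0K K (S n) * (\<Sum>u = 1..vmax. P n u * Fmut vmax fmut u)"
proof -
  define c where "c = b * (1 - S n / K) * indic_0K K (S n)"
  have "P (Suc n) = (\<lambda>v. (1 - fmort v) * P n v + c * conv_mut vmax (P n) fmut v)"
    by (simp add: c_def Let_def mult_ac)
  then show ?thesis
    unfolding c_def[symmetric] sum_conv_mut[symmetric]
    by (simp add: l1norm_def sum.distrib sum_distrib_left)
qed

lemma S_Suc_le:
  assumes m: "\<And>v. v \<in> {1..vmax} \<Longrightarrow> 1 - fmort v \<le> m" and "m \<le> 1"
    and F: "\<And>u. u \<in> {1..vmax} \<Longrightarrow> Fmut vmax fmut u \<le> F" and "0 < F" and "0 < b"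
  shows "S (Suc n) \<le> max ((m + b * F)\<^sup>2 / (4 * (b * F)) * K) (S n)"
proof -
  have mortality: "(\<Sum>v = 1..vmax. (1 - fmort v) * P n v) \<le> m * S n"
    unfolding l1norm_def sum_distrib_left
    by (intro sum_mono mult_right_mono) (auto simp: m P_nonneg)
  have birth: "(\<Sum>u = 1..vmax. P n u * Fmut vmax fmut u) \<le> F * S n"
    unfolding l1norm_def sum_distrib_left
    by (intro sum_mono) (metis F P_nonneg mult.commute mult_left_mono)
  show ?thesis
  proof (cases "S n \<le> K")
    case True
    then have "0 \<le> 1 - S n / K"
      using K_pos by (simp add: field_simps)
    then have "0 \<le> b * (1 - S n / K)"
      using b_nonneg by simp
    then have "S (Suc n) \<le> m * S n + b * (1 - S n / K) * (F * S n)"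
      unfolding S_Suc using True S_nonneg mortality mult_left_mono[OF birth]
      by (intro add_mono) (auto simp: indic_0K_def)
    also have "\<dots> = m * S n + (b * F) * S n * (1 - S n / K)"
      by (simp add: mult_ac)
    also have "\<dots> \<le> (m + b * F)\<^sup>2 / (4 * (b * F)) * K"
      using \<open>0 < F\<close> \<open>0 < b\<close> K_pos by (intro logistic_le_vertex) auto
    finally show ?thesis by simp
  next
    case False
    have "S (Suc n) \<le> m * S n"
      unfolding S_Suc using False mortality by (simp add: indic_0K_def)
    also have "\<dots> \<le> S n"
      using mult_right_mono[OF \<open>m \<le> 1\<close> S_nonneg] by simp
    finally show ?thesis by simp
  qed
qed

lemma S_le:
  assumes "\<And>v. v \<in> {1..vmax} \<Longrightarrow> 1 - fmort v \<le> m" and "m \<le> 1"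
    and "\<And>u. u \<in> {1..vmax} \<Longrightarrow> Fmut vmax fmut u \<le> F" and "0 < F" and "0 < b"
  shows "S n \<le> max ((m + b * F)\<^sup>2 / (4 * (b * F)) * K) (S 0)"
proof (induction n)
  case (Suc n)
  then show ?case using S_Suc_le[OF assms, of n] by linarith
qed simp

end

theorem theorem2p1:
  fixes vmax :: nat and b K :: real
    and fmort :: "nat \<Rightarrow> real" and fmut :: "int \<Rightarrow> real" and P0 :: "nat \<Rightarrow> real"
  assumes vmax: "vmax \<ge> 1"
    and b: "b > 0" and K: "K > 0"
    and fmort: "\<And>v. v \<in> {1..vmax} \<Longrightarrow> 0 < fmort v \<and> fmort v < 1"
    and fmut_range: "\<And>u. u \<in> {-int vmax..int vmax} \<Longrightarrow> 0 \<le> fmut u \<and> fmut u \<le> 1"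
    and fmut_sym: "\<And>u. u \<in> {-int vmax..int vmax} \<Longrightarrow> fmut (-u) = fmut u"
    and fmut_decr: "\<And>u w. 0 \<le> u \<Longrightarrow> u \<le> w \<Longrightarrow> w \<le> int vmax \<Longrightarrow> fmut w \<le> fmut u"
    and fmut_sum: "(\<Sum>u = -int vmax..int vmax. fmut u) = 1"
    and P0: "\<And>v. v \<in> {1..vmax} \<Longrightarrow> 0 \<le> P0 v"
  shows "\<forall>n. l1norm vmax (pop vmax b K fmort fmut P0 n) \<le> Bup vmax b K fmort fmut P0"
proof
  fix n
  have fmut_nonneg: "\<And>u. u \<in> {-int vmax..int vmax} \<Longrightarrow> 0 \<le> fmut u"
    using fmut_range by blast
  interpret trait_population vmax b K fmort fmut P0
    using b K fmort fmut_nonneg P0 by unfold_locales (auto simp: less_imp_le)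
  define m where "m = Max ((\<lambda>v. 1 - fmort v) ` {1..vmax})"
  define F where "F = Max (Fmut vmax fmut ` {1..vmax})"
  have "1 \<in> {1..vmax}" using vmax by simp
  have m_ge: "\<And>v. v \<in> {1..vmax} \<Longrightarrow> 1 - fmort v \<le> m"
    and F_ge: "\<And>u. u \<in> {1..vmax} \<Longrightarrow> Fmut vmax fmut u \<le> F"
    unfolding m_def F_def by (intro Max_ge; simp)+
  have "m \<le> 1"
    unfolding m_def using \<open>1 \<in> {1..vmax}\<close> fmort by (subst Max_le_iff) (auto simp: less_imp_le)
  have "0 < F"
    using mutation_kernel_center_pos[where fmut = fmut, OF fmut_nonneg fmut_sym fmut_decr fmut_sum]
      Fmut_ge_center[where fmut = fmut, OF fmut_nonneg \<open>1 \<in> {1..vmax}\<close>]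
      F_ge[OF \<open>1 \<in> {1..vmax}\<close>]
    by linarith
  show "S n \<le> Bup vmax b K fmort fmut P0"
    using S_le[OF m_ge \<open>m \<le> 1\<close> F_ge \<open>0 < F\<close> b, of n]
    by (simp add: Bup_def m_def F_def Let_def mult.assoc)
qed

end
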